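(* Let $R\in\mathbb R$ and let $f:[0,R)\to\mathbb R$ be continuously differentiable and satisfy (h1) $f(0)>0$, $f'(0)=-1$; (h2) $f'$ is strictly increasing and convex; (h3) $f(t)<0$ for some $t\in(0,R)$. Let $t_*:=\min f^{-1}(\{0\})$, $\bar\tau:=\sup\{t\in[0,R):f(t)<0\}$, $\bar t:=\sup\{t\in[0,R):f'(t)<0\}$, and \[\kappa:=\sup_{0<t<R}\frac{-f(t)}{t},\qquad \lambda:=\sup\{t\in[0,R):\kappa+f'(t)<0\},\qquad\Theta:=\frac{\kappa}{2-\kappa}.\] Then $0<\kappa<1$, $0<\Theta<1$, $t_*<\lambda\le\bar t\le\bar\tau$, $f'(t)+\kappa<0$ for all $t\in[0,\lambda)$, and \[\inf_{0\le t<R}\big(f(t)+\kappa t\big)=\lim_{t\to\lambda^-}\big(f(t)+\kappa t\big)=0.\] *)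

theory Defs
  imports "HOL-Analysis.Analysis"
begin

end

theory Submission
  imports Defs
begin

text \<open>Put \<open>g t = f t + \<kappa> * t\<close>. The definition of \<open>\<kappa>\<close> as the supremum of \<open>- f t / t\<close> says
  exactly that \<open>g \<ge> 0\<close> on \<open>[0, R)\<close> with infimum \<open>0\<close>; and since \<open>f'\<close> is strictly increasing with
  \<open>f' 0 = -1\<close>, \<open>f\<close> lies strictly above its tangent \<open>f 0 - t\<close>, which bounds \<open>\<kappa>\<close> by
  \<open>1 - f 0 / R < 1\<close>. The derivative \<open>\<kappa> + f'\<close> of \<open>g\<close> is strictly increasing and negative at \<open>0\<close>,
  so \<open>g\<close> strictly decreases on \<open>[0, \<lambda>)\<close> and increases after \<open>\<lambda>\<close>; hence \<open>g\<close> tends to its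
  infimum \<open>0\<close> as \<open>t \<rightarrow> \<lambda>\<^sup>-\<close>. Then \<open>f t = g t - \<kappa> t\<close> is negative just below \<open>\<lambda>\<close>, and the
  intermediate value theorem places a zero of \<open>f\<close> before \<open>\<lambda>\<close>.\<close>

lemma mvt_real_derivative_within:
  fixes f f' :: "real \<Rightarrow> real"
  assumes deriv: "\<And>t. t \<in> I \<Longrightarrow> (f has_real_derivative f' t) (at t within I)"
    and "x < y" "{x..y} \<subseteq> I"
  shows "\<exists>z\<in>{x<..<y}. f y - f x = (y - x) * f' z"
proof -
  have "(f has_derivative (*) (f' t)) (at t within {x..y})" if "x \<le> t" "t \<le> y" for t
    using that assms(3)
    by (intro has_derivative_subset[OF deriv[unfolded has_field_derivative_def]]) auto
  from mvt_simple[OF \<open>x < y\<close> this] show ?thesis by (auto simp: mult.commute)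
qed

lemma strict_mono_deriv_above_tangent:
  fixes f f' :: "real \<Rightarrow> real"
  assumes deriv: "\<And>t. t \<in> I \<Longrightarrow> (f has_real_derivative f' t) (at t within I)"
    and mono: "strict_mono_on I f'" and "a < b" "{a..b} \<subseteq> I"
  shows "f a + f' a * (b - a) < f b"
proof -
  obtain z where z: "z \<in> {a<..<b}" "f b - f a = (b - a) * f' z"
    using mvt_real_derivative_within[OF deriv assms(3,4)] by blast
  have "a \<in> I" "z \<in> I" using z(1) assms(3,4) by auto
  with z(1) have "f' a < f' z" by (auto intro: strict_mono_onD[OF mono])
  then have "f' a * (b - a) < f' z * (b - a)"
    using \<open>a < b\<close> by (intro mult_strict_right_mono) auto
  with z(2) show ?thesis by (simp add: algebra_simps)
qed

lemma strict_mono_on_neg_below_Sup: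
  fixes h :: "real \<Rightarrow> real"
  assumes "strict_mono_on I h" "bdd_above {s \<in> I. h s < 0}" "{s \<in> I. h s < 0} \<noteq> {}"
    and "t \<in> I" "t < Sup {s \<in> I. h s < 0}"
  shows "h t < 0"
proof -
  obtain u where "u \<in> I" "h u < 0" "t < u"
    using assms(2,3,5) by (auto simp: less_cSup_iff)
  with assms(1,4) show ?thesis by (meson order.strict_trans strict_mono_onD)
qed

lemma Sup_neg_set_pos:
  fixes h :: "real \<Rightarrow> real"
  assumes "continuous_on {0..<R} h" "h 0 < 0" "0 < R"
  shows "0 < Sup {t \<in> {0..<R}. h t < 0}"
proof -
  have "continuous (at 0 within {0..<R}) h"
    using assms(1,3) by (simp add: continuous_on_eq_continuous_within)
  then obtain d where d: "0 < d" "\<And>t. t \<in> {0..<R} \<Longrightarrow> dist t 0 < d \<Longrightarrow> dist (h t) (h 0) < - h 0"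
    using assms(2) unfolding continuous_within_eps_delta by (meson neg_0_less_iff_less)
  define t where "t = min (d / 2) (R / 2)"
  have "t \<in> {0..<R}" "dist t 0 < d" using d(1) assms(3) by (auto simp: t_def)
  then have "\<bar>h t - h 0\<bar> < - h 0" using d(2) by (simp add: dist_real_def)
  then have "h t < 0" by (simp add: abs_less_iff)
  with \<open>t \<in> {0..<R}\<close> have "t \<le> Sup {t \<in> {0..<R}. h t < 0}"
    by (intro cSup_upper) (auto intro: bdd_aboveI[of _ R])
  moreover have "0 < t" using d assms(3) by (simp add: t_def)
  ultimately show ?thesis by linarith
qed

lemma Sup_neg_set_bounds:
  fixes h :: "real \<Rightarrow> real"
  assumes "0 < R" "h 0 < 0"
  shows "0 \<le> Sup {t \<in> {0..<R}. h t < 0}" "Sup {t \<in> {0..<R}. h t < 0} \<le> R"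
  using assms by (auto intro!: cSup_upper cSup_least bdd_aboveI[of _ R])

lemma strict_antimono_before_Sup_neg_deriv:
  fixes g g' :: "real \<Rightarrow> real"
  assumes deriv: "\<And>t. t \<in> {0..<R} \<Longrightarrow> (g has_real_derivative g' t) (at t within {0..<R})"
    and mono: "strict_mono_on {0..<R} g'" and "0 < R" "g' 0 < 0"
    and "0 \<le> x" "x < y" "y < Sup {t \<in> {0..<R}. g' t < 0}"
  shows "g y < g x"
proof -
  have "y < R" using Sup_neg_set_bounds(2)[of R g', OF \<open>0 < R\<close> \<open>g' 0 < 0\<close>] assms(7) by linarith
  with assms(5) have "{x..y} \<subseteq> {0..<R}" by auto
  then obtain z where z: "z \<in> {x<..<y}" "g y - g x = (y - x) * g' z"
    using mvt_real_derivative_within[OF deriv \<open>x < y\<close>] by blast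
  have "g' z < 0"
    using z(1) assms(5,7) \<open>y < R\<close> \<open>0 < R\<close> \<open>g' 0 < 0\<close>
    by (intro strict_mono_on_neg_below_Sup[OF mono]) (auto intro: bdd_aboveI[of _ R] exI[of _ 0])
  with \<open>x < y\<close> have "(y - x) * g' z < 0" by (simp add: mult_pos_neg)
  with z(2) show ?thesis by simp
qed

lemma min_at_Sup_neg_deriv:
  fixes g g' :: "real \<Rightarrow> real"
  assumes deriv: "\<And>t. t \<in> {0..<R} \<Longrightarrow> (g has_real_derivative g' t) (at t within {0..<R})"
    and mono: "strict_mono_on {0..<R} g'" and "0 < R" "g' 0 < 0"
    and lam: "lam = Sup {t \<in> {0..<R}. g' t < 0}" "lam < R" and t: "t \<in> {0..<R}"
  shows "g lam \<le> g t"
proof (cases t lam rule: linorder_cases)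
  case less
  have "{t..lam} \<subseteq> {0..<R}" using t lam(2) by auto
  then obtain z where z: "z \<in> {t<..<lam}" "g lam - g t = (lam - t) * g' z"
    using mvt_real_derivative_within[OF deriv less] by blast
  have "g' z < 0"
    using z(1) t lam \<open>0 < R\<close> \<open>g' 0 < 0\<close>
    by (intro strict_mono_on_neg_below_Sup[OF mono]) (auto intro: bdd_aboveI[of _ R] exI[of _ 0])
  with less have "(lam - t) * g' z < 0" by (simp add: mult_pos_neg)
  with z(2) show ?thesis by simp
next
  case greater
  have "0 \<le> lam" using Sup_neg_set_bounds(1)[of R g', OF \<open>0 < R\<close> \<open>g' 0 < 0\<close>] lam(1) by simp
  with t have "{lam..t} \<subseteq> {0..<R}" by auto
  then obtain z where z: "z \<in> {lam<..<t}" "g t - g lam = (t - lam) * g' z"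
    using mvt_real_derivative_within[OF deriv greater] by blast
  have "\<not> g' z < 0"
  proof
    assume "g' z < 0"
    with z(1) t \<open>0 \<le> lam\<close> have "z \<le> lam"
      unfolding lam(1) by (intro cSup_upper) (auto intro: bdd_aboveI[of _ R])
    with z(1) show False by simp
  qed
  with greater have "0 \<le> (t - lam) * g' z" by simp
  with z(2) show ?thesis by simp
qed simp

lemma tendsto_Inf_at_left_Sup_neg_deriv:
  fixes g g' :: "real \<Rightarrow> real"
  assumes deriv: "\<And>t. t \<in> {0..<R} \<Longrightarrow> (g has_real_derivative g' t) (at t within {0..<R})"
    and mono: "strict_mono_on {0..<R} g'" and "0 < R" "g' 0 < 0"
    and lam: "lam = Sup {t \<in> {0..<R}. g' t < 0}" "0 < lam"
    and bdd: "bdd_below (g ` {0..<R})"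
  shows "(g \<longlongrightarrow> Inf (g ` {0..<R})) (at_left lam)"
proof (cases "lam < R")
  case True
  have "g lam \<le> Inf (g ` {0..<R})"
    using min_at_Sup_neg_deriv[OF deriv mono \<open>0 < R\<close> \<open>g' 0 < 0\<close> lam(1) True] \<open>0 < R\<close>
    by (intro cInf_greatest) auto
  moreover have "Inf (g ` {0..<R}) \<le> g lam"
    using bdd True lam(2) by (intro cInf_lower) auto
  moreover have "at lam within {0..<R} = at lam"
    using True lam(2) by (intro at_within_interior) auto
  then have "isCont g lam"
    using DERIV_isCont deriv[of lam] True lam(2) by auto
  ultimately have "(g \<longlongrightarrow> Inf (g ` {0..<R})) (at lam)"
    by (simp add: isCont_def)
  then show ?thesis by (rule tendsto_mono[rotated]) (simp add: at_le)
next
  case False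
  with Sup_neg_set_bounds(2)[of R g', OF \<open>0 < R\<close> \<open>g' 0 < 0\<close>] lam(1) have "lam = R" by simp
  show ?thesis
  proof (rule tendstoI)
    fix e :: real assume "0 < e"
    then have "Inf (g ` {0..<R}) < Inf (g ` {0..<R}) + e" by simp
    then obtain t0 where t0: "t0 \<in> {0..<R}" "g t0 < Inf (g ` {0..<R}) + e"
      using \<open>0 < R\<close> bdd by (subst (asm) cInf_less_iff) auto
    have "eventually (\<lambda>x. x \<in> {t0<..<lam}) (at_left lam)"
      using t0(1) \<open>lam = R\<close> by (intro eventually_at_left_real) auto
    then show "eventually (\<lambda>x. dist (g x) (Inf (g ` {0..<R})) < e) (at_left lam)"
    proof (rule eventually_mono)
      fix x assume x: "x \<in> {t0<..<lam}"
      then have "g x < g t0"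
        using t0(1) lam(1) by (intro strict_antimono_before_Sup_neg_deriv[OF deriv mono \<open>0 < R\<close> \<open>g' 0 < 0\<close>]) auto
      moreover have "Inf (g ` {0..<R}) \<le> g x"
        using x t0(1) bdd \<open>lam = R\<close> by (intro cInf_lower) auto
      ultimately show "dist (g x) (Inf (g ` {0..<R})) < e"
        using t0(2) by (simp add: dist_real_def)
    qed
  qed
qed

lemma neg_slope_less:
  fixes f f' :: "real \<Rightarrow> real"
  assumes deriv: "\<And>t. t \<in> {0..<R} \<Longrightarrow> (f has_real_derivative f' t) (at t within {0..<R})"
    and mono: "strict_mono_on {0..<R} f'" and "0 \<le> f 0" and t: "t \<in> {0<..<R}"
  shows "- f t / t < - f' 0 - f 0 / R"
proof -
  have "f 0 + f' 0 * (t - 0) < f t"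
    using t by (intro strict_mono_deriv_above_tangent[OF deriv mono]) auto
  then have "- f t / t < (- f 0 - f' 0 * t) / t"
    using t by (intro divide_strict_right_mono) auto
  also have "\<dots> = - f' 0 - f 0 / t"
    using t by (simp add: field_simps)
  also have "\<dots> \<le> - f' 0 - f 0 / R"
    using t \<open>0 \<le> f 0\<close> by (simp add: frac_le)
  finally show ?thesis .
qed

lemma Sup_neg_slope_bounds:
  fixes f f' :: "real \<Rightarrow> real"
  assumes deriv: "\<And>t. t \<in> {0..<R} \<Longrightarrow> (f has_real_derivative f' t) (at t within {0..<R})"
    and mono: "strict_mono_on {0..<R} f'" and "0 < f 0" and s: "s \<in> {0<..<R}" "f s < 0"
  shows "bdd_above ((\<lambda>t. - f t / t) ` {0<..<R})"
    and "0 < Sup ((\<lambda>t. - f t / t) ` {0<..<R})"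
    and "Sup ((\<lambda>t. - f t / t) ` {0<..<R}) < - f' 0"
proof -
  have less: "- f t / t < - f' 0 - f 0 / R" if "t \<in> {0<..<R}" for t
    using neg_slope_less[OF deriv mono _ that] \<open>0 < f 0\<close> by simp
  then show bdd: "bdd_above ((\<lambda>t. - f t / t) ` {0<..<R})"
    by (auto intro!: bdd_aboveI[of _ "- f' 0 - f 0 / R"] less_imp_le)
  have "0 < - f s / s" using s by (simp add: divide_neg_pos)
  also have "\<dots> \<le> Sup ((\<lambda>t. - f t / t) ` {0<..<R})"
    using bdd s by (intro cSup_upper) auto
  finally show "0 < Sup ((\<lambda>t. - f t / t) ` {0<..<R})" .
  have "Sup ((\<lambda>t. - f t / t) ` {0<..<R}) \<le> - f' 0 - f 0 / R"
    using s less by (intro cSup_least) (auto intro: less_imp_le)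
  also have "\<dots> < - f' 0" using s \<open>0 < f 0\<close> by simp
  finally show "Sup ((\<lambda>t. - f t / t) ` {0<..<R}) < - f' 0" .
qed

lemma add_Sup_neg_slope_nonneg:
  fixes f :: "real \<Rightarrow> real"
  assumes bdd: "bdd_above ((\<lambda>t. - f t / t) ` {0<..<R})" and "0 \<le> f 0"
    and \<kappa>: "\<kappa> = Sup ((\<lambda>t. - f t / t) ` {0<..<R})" and t: "t \<in> {0..<R}"
  shows "0 \<le> f t + \<kappa> * t"
proof (cases "t = 0")
  case False
  with t have "t \<in> {0<..<R}" by auto
  with bdd have "- f t / t \<le> \<kappa>" unfolding \<kappa> by (intro cSup_upper) auto
  with \<open>t \<in> {0<..<R}\<close> show ?thesis by (simp add: field_simps)
qed (simp add: \<open>0 \<le> f 0\<close>)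

lemma Inf_add_Sup_neg_slope:
  fixes f :: "real \<Rightarrow> real"
  assumes bdd: "bdd_above ((\<lambda>t. - f t / t) ` {0<..<R})" and "0 \<le> f 0"
    and \<kappa>: "\<kappa> = Sup ((\<lambda>t. - f t / t) ` {0<..<R})" and "0 < R"
  shows "Inf ((\<lambda>t. f t + \<kappa> * t) ` {0..<R}) = 0"
proof (rule antisym)
  show "0 \<le> Inf ((\<lambda>t. f t + \<kappa> * t) ` {0..<R})"
    using add_Sup_neg_slope_nonneg[OF bdd \<open>0 \<le> f 0\<close> \<kappa>] \<open>0 < R\<close> by (intro cInf_greatest) auto
  show "Inf ((\<lambda>t. f t + \<kappa> * t) ` {0..<R}) \<le> 0"
  proof (rule field_le_epsilon)
    fix e :: real assume "0 < e"
    then have "\<kappa> - e / R < Sup ((\<lambda>t. - f t / t) ` {0<..<R})"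
      using \<kappa> \<open>0 < R\<close> by simp
    then obtain t where t: "t \<in> {0<..<R}" "\<kappa> - e / R < - f t / t"
      using bdd \<open>0 < R\<close> by (subst (asm) less_cSup_iff) auto
    then have "f t + \<kappa> * t < e / R * t" by (simp add: field_simps)
    also have "\<dots> < e" using t \<open>0 < e\<close> by (simp add: field_simps)
    finally have "f t + \<kappa> * t < e" .
    moreover have "Inf ((\<lambda>t. f t + \<kappa> * t) ` {0..<R}) \<le> f t + \<kappa> * t"
      using t add_Sup_neg_slope_nonneg[OF bdd \<open>0 \<le> f 0\<close> \<kappa>]
      by (intro cInf_lower) (auto intro: bdd_belowI[of _ 0])
    ultimately show "Inf ((\<lambda>t. f t + \<kappa> * t) ` {0..<R}) \<le> 0 + e" by simp
  qed
qed

lemma Inf_zeros_less: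
  fixes f :: "real \<Rightarrow> real"
  assumes cont: "continuous_on {0..<R} f" and "0 < f 0" "0 < lam" "lam \<le> R" "0 < \<kappa>"
    and lim: "((\<lambda>t. f t + \<kappa> * t) \<longlongrightarrow> 0) (at_left lam)"
  shows "Inf {t \<in> {0..<R}. f t = 0} < lam"
proof -
  have "((\<lambda>t. (f t + \<kappa> * t) - \<kappa> * t) \<longlongrightarrow> 0 - \<kappa> * lam) (at_left lam)"
    by (intro tendsto_intros lim)
  then have "eventually (\<lambda>t. f t < 0) (at_left lam)"
    using \<open>0 < lam\<close> \<open>0 < \<kappa>\<close> by (auto dest: order_tendstoD(2)[where a = 0])
  moreover have "eventually (\<lambda>t. t \<in> {0<..<lam}) (at_left lam)"
    using \<open>0 < lam\<close> by (intro eventually_at_left_real) auto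
  ultimately obtain t where t: "t \<in> {0<..<lam}" "f t < 0"
    using eventually_happens'[OF trivial_limit_at_left_real] eventually_conj by blast
  have "continuous_on {0..t} f"
    using t \<open>lam \<le> R\<close> by (intro continuous_on_subset[OF cont]) auto
  then obtain z where z: "0 \<le> z" "z \<le> t" "f z = 0"
    using IVT2'[of f t 0 0] t \<open>0 < f 0\<close> by auto
  then have "Inf {t \<in> {0..<R}. f t = 0} \<le> z"
    using t \<open>lam \<le> R\<close> by (intro cInf_lower) (auto intro: bdd_belowI[of _ 0])
  with z t show ?thesis by simp
qed

lemma Sup_neg_deriv_le_Sup_neg:
  fixes f f' :: "real \<Rightarrow> real"
  assumes deriv: "\<And>t. t \<in> {0..<R} \<Longrightarrow> (f has_real_derivative f' t) (at t within {0..<R})"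
    and mono: "strict_mono_on {0..<R} f'" and "0 < R" "f' 0 < 0"
    and s: "s \<in> {0..<R}" "f s < 0"
  shows "Sup {t \<in> {0..<R}. f' t < 0} \<le> Sup {t \<in> {0..<R}. f t < 0}"
proof (rule cSup_least)
  show "{t \<in> {0..<R}. f' t < 0} \<noteq> {}" using \<open>0 < R\<close> \<open>f' 0 < 0\<close> by (auto intro!: exI[of _ 0])
  have bdd: "bdd_above {t \<in> {0..<R}. f t < 0}" by (auto intro: bdd_aboveI[of _ R])
  fix x assume x: "x \<in> {t \<in> {0..<R}. f' t < 0}"
  show "x \<le> Sup {t \<in> {0..<R}. f t < 0}"
  proof (cases "x \<le> s")
    case True
    also have "s \<le> Sup {t \<in> {0..<R}. f t < 0}" using s bdd by (intro cSup_upper) auto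
    finally show ?thesis .
  next
    case False
    with s x have "{s..x} \<subseteq> {0..<R}" by auto
    with False obtain z where z: "z \<in> {s<..<x}" "f x - f s = (x - s) * f' z"
      using mvt_real_derivative_within[OF deriv] by (meson not_le)
    have "f' z < f' x" using z(1) s x by (intro strict_mono_onD[OF mono]) auto
    with x False have "(x - s) * f' z < 0" by (intro mult_pos_neg) auto
    with z(2) s x have "x \<in> {t \<in> {0..<R}. f t < 0}" by auto
    then show ?thesis using bdd by (rule cSup_upper)
  qed
qed

theorem proposition2p4:
  fixes f f' :: "real \<Rightarrow> real" and R :: real
    and tstar taubar tbar \<kappa> lam \<Theta> :: real
  assumes deriv: "\<And>t. t \<in> {0..<R} \<Longrightarrow> (f has_real_derivative f' t) (at t within {0..<R})"
    and cont: "continuous_on {0..<R} f'"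
    and h1a: "f 0 > 0" and h1b: "f' 0 = -1"
    and h2a: "strict_mono_on {0..<R} f'" and h2b: "convex_on {0..<R} f'"
    and h3: "\<exists>t\<in>{0<..<R}. f t < 0"
    and tstar_def: "tstar = Inf {t \<in> {0..<R}. f t = 0}"
    and taubar_def: "taubar = Sup {t \<in> {0..<R}. f t < 0}"
    and tbar_def: "tbar = Sup {t \<in> {0..<R}. f' t < 0}"
    and kappa_def: "\<kappa> = Sup ((\<lambda>t. - f t / t) ` {0<..<R})"
    and lam_def: "lam = Sup {t \<in> {0..<R}. \<kappa> + f' t < 0}"
    and Theta_def: "\<Theta> = \<kappa> / (2 - \<kappa>)"
  shows "0 < \<kappa> \<and> \<kappa> < 1 \<and> 0 < \<Theta> \<and> \<Theta> < 1
    \<and> tstar < lam \<and> lam \<le> tbar \<and> tbar \<le> taubar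
    \<and> (\<forall>t\<in>{0..<lam}. f' t + \<kappa> < 0)
    \<and> Inf ((\<lambda>t. f t + \<kappa> * t) ` {0..<R}) = 0
    \<and> ((\<lambda>t. f t + \<kappa> * t) \<longlongrightarrow> 0) (at_left lam)"
proof -
  obtain s where s: "s \<in> {0<..<R}" "f s < 0" using h3 by blast
  then have "0 < R" by simp
  note slope = Sup_neg_slope_bounds[OF deriv h2a h1a s]
  have k0: "0 < \<kappa>" and k1: "\<kappa> < 1" using slope(2,3) h1b kappa_def by simp_all
  have g_deriv: "((\<lambda>t. f t + \<kappa> * t) has_real_derivative \<kappa> + f' t) (at t within {0..<R})"
    if "t \<in> {0..<R}" for t
    using deriv[OF that] by (auto intro!: derivative_eq_intros)
  have g'_mono: "strict_mono_on {0..<R} (\<lambda>t. \<kappa> + f' t)"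
    using h2a by (auto simp: strict_mono_on_def)
  have g'0: "\<kappa> + f' 0 < 0" using h1b k1 by simp
  have lam_set_ne: "{t \<in> {0..<R}. \<kappa> + f' t < 0} \<noteq> {}"
    using \<open>0 < R\<close> g'0 by (auto intro!: exI[of _ 0])
  have lam_pos: "0 < lam"
    unfolding lam_def using cont \<open>0 < R\<close> g'0 by (intro Sup_neg_set_pos) (auto intro: continuous_intros)
  have lam_le: "lam \<le> R"
    using Sup_neg_set_bounds(2)[of R "\<lambda>t. \<kappa> + f' t", OF \<open>0 < R\<close> g'0] lam_def by simp
  have g_nonneg: "\<And>t. t \<in> {0..<R} \<Longrightarrow> 0 \<le> f t + \<kappa> * t"
    using add_Sup_neg_slope_nonneg[OF slope(1) _ kappa_def] h1a by simp
  have inf: "Inf ((\<lambda>t. f t + \<kappa> * t) ` {0..<R}) = 0"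
    using Inf_add_Sup_neg_slope[OF slope(1) _ kappa_def \<open>0 < R\<close>] h1a by simp
  have "bdd_below ((\<lambda>t. f t + \<kappa> * t) ` {0..<R})"
    using g_nonneg by (auto intro: bdd_belowI[of _ 0])
  with inf have lim: "((\<lambda>t. f t + \<kappa> * t) \<longlongrightarrow> 0) (at_left lam)"
    using tendsto_Inf_at_left_Sup_neg_deriv[OF g_deriv g'_mono \<open>0 < R\<close> g'0 lam_def lam_pos] by simp
  have "tstar < lam"
    unfolding tstar_def using DERIV_continuous_on[OF deriv] h1a lam_pos lam_le k0 lim
    by (rule Inf_zeros_less)
  moreover have "lam \<le> tbar"
    unfolding lam_def tbar_def using lam_set_ne k0
    by (intro cSup_subset_mono) (auto intro: bdd_aboveI[of _ R])
  moreover have "tbar \<le> taubar"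
    unfolding tbar_def taubar_def using Sup_neg_deriv_le_Sup_neg[OF deriv h2a \<open>0 < R\<close> _ _ s(2)] h1b s(1)
    by simp
  moreover have "\<forall>t\<in>{0..<lam}. f' t + \<kappa> < 0"
  proof
    fix t assume t: "t \<in> {0..<lam}"
    have "bdd_above {t \<in> {0..<R}. \<kappa> + f' t < 0}" by (auto intro: bdd_aboveI[of _ R])
    then have "\<kappa> + f' t < 0"
      using t lam_le lam_def by (intro strict_mono_on_neg_below_Sup[OF g'_mono _ lam_set_ne]) auto
    then show "f' t + \<kappa> < 0" by simp
  qed
  moreover have "0 < \<Theta>" using k0 k1 by (simp add: Theta_def)
  moreover have "\<Theta> < 1" using k1 by (simp add: Theta_def divide_less_eq)
  ultimately show ?thesis using k0 k1 inf lim by simp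
qed

end
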